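(* For every $b\in\mathbb R$, $$\lim_{z\to\infty}e^{-z}z^{b+1}\sum_{k=1}^\infty\frac{z^{k-1}}{k!\,k^b}=1.$$ Moreover, if $b\ge-1$, then $$\sup_{z\ge0}\ e^{-z}z^{b+1}\sum_{k=1}^\infty\frac{z^{k-1}}{k!\,k^b}<\infty.$$ *)

theory Defs
  imports "HOL-Analysis.Analysis"
begin

definition F :: "real \<Rightarrow> real \<Rightarrow> real" where
  "F b z = exp (- z) * z powr (b + 1) *
     (\<Sum>n. z ^ n / (fact (Suc n) * real (Suc n) powr b))"

end

theory Submission
  imports Defs
begin

text \<open>
  Write pweight z n = z^(n+1)/(n+1)! for the terms of the series exp z - 1. For z > 0,
  F b z = e^{-z} \<Sum>_n pweight z n (z/(n+1))^b, i.e. an average of (z/K)^b over a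
  Poisson-distributed K \<ge> 1, which concentrates around K \<approx> z. Every estimate below
  bounds the factor y^b, y = z/(n+1) (or a relative of it), by an affine expression
  in a quantity whose weighted sum is explicit or controlled:
  \<^item> lower bounds come from the tangent inequality y^b \<ge> 1 + b ln y, combined with
    ln y \<ge> 1 - 1/y (b \<ge> 0) or ln y \<le> y - 1 (b < 0, comparing F b with F 1);
  \<^item> upper bounds come from concavity, u^t \<le> 1 + t(u - 1) for 0 \<le> t \<le> 1, applied to
    u = y^(\<plusminus>j) with t = |b|/j; for b < 0 this needs the moments
    \<Sum>_n pweight z n (n+1)^j \<le> e^z (z+j)^j, for b \<ge> 0 a shift of the index by j and a
    cut-off L separating finitely many head terms, each of which tends to 0.
  The file first collects the elementary inequalities and the facts about the
  weights, then rewrites F as a series and proves the lower and upper bounds;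
  both limits and the uniform bound for b \<ge> -1 follow directly from these bounds.
\<close>

text \<open>Concavity of u \<mapsto> u^t for 0 \<le> t \<le> 1: the graph lies below its tangent at 1.\<close>
lemma powr_le_tangent_line:
  fixes y t :: real
  assumes "0 \<le> t" "t \<le> 1" "y > 0"
  shows "y powr t \<le> 1 + t * (y - 1)"
  using Youngs_inequality_0[of t "1 - t" y 1] assms by (simp add: algebra_simps)

text \<open>Convexity of b \<mapsto> y^b = exp (b ln y): the tangent at b = 0.\<close>
lemma one_plus_ln_le_powr:
  fixes y b :: real
  assumes "y > 0"
  shows "1 + b * ln y \<le> y powr b"
  using assms exp_ge_add_one_self[of "b * ln y"] by (simp add: powr_def mult.commute)

lemma one_minus_inverse_le_ln:
  fixes y :: real
  assumes "y > 0"
  shows "1 - 1 / y \<le> ln y"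
  using ln_le_minus_one[of "1 / y"] assms by (simp add: ln_div)

lemma powr_via_power:
  fixes y a :: real
  assumes "y > 0" "j > 0"
  shows "y powr a = (y ^ j) powr (a / real j)"
  using assms by (simp add: powr_realpow[symmetric] powr_powr)

text \<open>Each of the j factors m+1, ..., m+j of (m+j)!/m! is at most m+j.\<close>
lemma fact_add_le: "(fact (m + j) :: real) \<le> fact m * real (m + j) ^ j"
proof (induction j)
  case (Suc j)
  have "(fact (m + Suc j) :: real) = real (m + Suc j) * fact (m + j)" by simp
  also have "\<dots> \<le> real (m + Suc j) * (fact m * real (m + j) ^ j)"
    using Suc.IH by (intro mult_left_mono) auto
  also have "\<dots> \<le> real (m + Suc j) * (fact m * real (m + Suc j) ^ j)"
    by (intro mult_left_mono power_mono) auto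
  also have "\<dots> = fact m * real (m + Suc j) ^ Suc j" by (simp add: algebra_simps)
  finally show ?case .
qed simp

definition pweight :: "real \<Rightarrow> nat \<Rightarrow> real" where
  "pweight z n = z ^ Suc n / fact (Suc n)"

lemma pweight_nonneg: "z \<ge> 0 \<Longrightarrow> pweight z n \<ge> 0"
  by (simp add: pweight_def)

lemma exp_sums: "(\<lambda>n. z ^ n / fact n) sums exp (z::real)"
  using exp_converges[of z] by (simp add: divide_inverse_commute scaleR_conv_of_real)

lemma pweight_sums: "pweight z sums (exp z - 1)"
  unfolding pweight_def by (subst sums_Suc_iff) (use exp_sums[of z] in simp)

lemma pweight_shift_sums:
  assumes "z \<ge> 0"
  shows "\<exists>s. (\<lambda>n. pweight z (n + j)) sums s \<and> s \<le> exp z - 1"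
proof -
  have "(\<lambda>n. pweight z (n + j)) sums (exp z - 1 - (\<Sum>n<j. pweight z n))"
    using pweight_sums[of z] by (subst sums_iff_shift) simp
  moreover have "0 \<le> (\<Sum>n<j. pweight z n)"
    using assms by (intro sum_nonneg pweight_nonneg)
  ultimately show ?thesis by force
qed

text \<open>Multiplying the k-th exponential term by k shifts the series and brings out a
  factor z; this is the recursion behind all moment computations.\<close>
lemma exp_series_times_index:
  assumes "(\<lambda>m. z ^ m / fact m * f (Suc m)) sums s"
  shows "(\<lambda>k. z ^ k / fact k * real k * f k) sums (z * s)"
proof -
  have "z ^ Suc m / fact (Suc m) * real (Suc m) * f (Suc m) = z * (z ^ m / fact m * f (Suc m))"
    for m by (simp add: fact_Suc del: of_nat_Suc)
  with sums_mult[OF assms, of z]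
  have "(\<lambda>m. z ^ Suc m / fact (Suc m) * real (Suc m) * f (Suc m)) sums (z * s)"
    by (simp add: mult.assoc)
  thus ?thesis
    by (subst (asm) sums_Suc_iff[where f = "\<lambda>k. z ^ k / fact k * real k * f k"]) simp
qed

lemma pweight_first_moment: "(\<lambda>n. pweight z n * real (Suc n)) sums (z * exp z)"
proof -
  have "(\<lambda>k. z ^ k / fact k * real k * 1) sums (z * exp z)"
    using exp_series_times_index[of z "\<lambda>_. 1"] exp_sums[of z] by simp
  thus ?thesis unfolding pweight_def
    by (subst sums_Suc_iff[where f = "\<lambda>k. z ^ k / fact k * real k"]) simp
qed

lemma exp_moment_bound:
  fixes z c :: real
  assumes "z \<ge> 0" "c \<ge> 0"
  shows "\<exists>s. (\<lambda>k. z ^ k / fact k * (real k + c) ^ j) sums s \<and>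
             s \<le> exp z * (z + c + real j) ^ j"
  using assms(2)
proof (induction j arbitrary: c)
  case 0
  show ?case using exp_sums[of z] by auto
next
  case (Suc j)
  define M where "M = z + c + real (Suc j)"
  obtain s1 where s1: "(\<lambda>k. z ^ k / fact k * (real k + (c + 1)) ^ j) sums s1"
      "s1 \<le> exp z * M ^ j"
    using Suc.IH[of "c + 1"] Suc.prems by (auto simp: M_def add_ac)
  obtain s0 where s0: "(\<lambda>k. z ^ k / fact k * (real k + c) ^ j) sums s0"
      "s0 \<le> exp z * (z + c + real j) ^ j"
    using Suc.IH Suc.prems by blast
  have "s0 \<le> exp z * M ^ j"
  proof -
    have "(z + c + real j) ^ j \<le> M ^ j"
      using assms Suc.prems by (intro power_mono) (auto simp: M_def)
    thus ?thesis using s0(2) by (meson exp_ge_zero mult_left_mono order_trans)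
  qed
  have "(\<lambda>k. z ^ k / fact k * real k * (real k + c) ^ j) sums (z * s1)"
    using exp_series_times_index[of z "\<lambda>k. (real k + c) ^ j"] s1(1) by (simp add: add_ac)
  hence "(\<lambda>k. z ^ k / fact k * real k * (real k + c) ^ j
              + c * (z ^ k / fact k * (real k + c) ^ j)) sums (z * s1 + c * s0)"
    by (intro sums_add sums_mult s0(1))
  hence S: "(\<lambda>k. z ^ k / fact k * (real k + c) ^ Suc j) sums (z * s1 + c * s0)"
    by (simp add: algebra_simps)
  have "z * s1 + c * s0 \<le> z * (exp z * M ^ j) + c * (exp z * M ^ j)"
    using s1(2) \<open>s0 \<le> exp z * M ^ j\<close> assms Suc.prems
    by (intro add_mono mult_left_mono) auto
  also have "\<dots> = (z + c) * (exp z * M ^ j)" by (simp add: algebra_simps)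
  also have "\<dots> \<le> M * (exp z * M ^ j)"
    using assms Suc.prems by (intro mult_right_mono) (auto simp: M_def)
  finally show ?case using S by (auto simp: M_def mult_ac)
qed

lemma pweight_moment_bound:
  assumes "z \<ge> 0" "j \<ge> 1"
  shows "\<exists>s. (\<lambda>n. pweight z n * real (Suc n) ^ j) sums s \<and>
             s \<le> exp z * (z + real j) ^ j"
proof -
  obtain s where s: "(\<lambda>k. z ^ k / fact k * real k ^ j) sums s" "s \<le> exp z * (z + real j) ^ j"
    using exp_moment_bound[of z 0 j] assms by auto
  have "(\<lambda>n. pweight z n * real (Suc n) ^ j) sums s"
    unfolding pweight_def
    by (subst sums_Suc_iff[where f = "\<lambda>k. z ^ k / fact k * real k ^ j"])
      (use s(1) assms(2) in \<open>simp add: power_0_left\<close>)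
  with s(2) show ?thesis by blast
qed

section \<open>The series behind F\<close>

text \<open>For z > 0 the series in the definition of F, multiplied by z^(b+1), has terms
  pweight z n * (z/(n+1))^b.\<close>
definition F_term :: "real \<Rightarrow> real \<Rightarrow> nat \<Rightarrow> real" where
  "F_term b z n = pweight z n * (z / real (Suc n)) powr b"

lemma F_term_nonneg: "z > 0 \<Longrightarrow> F_term b z n \<ge> 0"
  by (simp add: F_term_def pweight_nonneg)

text \<open>Summability: (z/(n+1))^b is dominated by a polynomial in n, and the weights have
  finite moments of every order.\<close>
lemma F_term_summable:
  assumes z: "z > 0"
  shows "summable (F_term b z)"
proof -
  define j where "j = Suc (nat \<lceil>- b\<rceil>)"
  have j: "j \<ge> 1" "- b \<le> real j" unfolding j_def by linarith+
  obtain s where s: "(\<lambda>n. pweight z n * real (Suc n) ^ j) sums s"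
    using pweight_moment_bound[of z j] z j by auto
  show ?thesis
  proof (rule summable_comparison_test)
    show "summable (\<lambda>n. z powr b * (pweight z n * real (Suc n) ^ j))"
      using s by (intro summable_mult) (auto simp: sums_iff)
    have "norm (F_term b z n) \<le> z powr b * (pweight z n * real (Suc n) ^ j)" for n
    proof -
      have "(z / real (Suc n)) powr b = z powr b * real (Suc n) powr (- b)"
        by (simp add: powr_divide powr_minus_divide)
      also have "real (Suc n) powr (- b) \<le> real (Suc n) powr real j"
        using j by (intro powr_mono) auto
      finally have "(z / real (Suc n)) powr b \<le> z powr b * real (Suc n) ^ j"
        by (simp add: powr_realpow mult_left_mono)
      thus ?thesis using F_term_nonneg[OF z, of b n] pweight_nonneg[of z n] z
        by (simp add: F_term_def mult_left_mono mult.left_commute)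
    qed
    thus "\<exists>N. \<forall>n\<ge>N. norm (F_term b z n) \<le> z powr b * (pweight z n * real (Suc n) ^ j)"
      by blast
  qed
qed

lemma F_eq_suminf:
  assumes z: "z > 0"
  shows "F b z = exp (- z) * suminf (F_term b z)"
proof -
  define g where "g n = z ^ n / (fact (Suc n) * real (Suc n) powr b)" for n
  have F_term_eq: "F_term b z n = z powr (b + 1) * g n" for n
    using z by (simp add: F_term_def pweight_def g_def powr_add powr_divide field_simps)
  have "summable g"
    using summable_divide[OF F_term_summable[OF z], of b "z powr (b + 1)"] z
    by (simp add: F_term_eq)
  hence "suminf (F_term b z) = z powr (b + 1) * suminf g"
    unfolding F_term_eq[abs_def] by (rule suminf_mult)
  thus ?thesis by (simp add: F_def g_def[abs_def])
qed

lemma F_le_by_termwise: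
  assumes "z > 0" "\<And>n. F_term b z n \<le> u n" "u sums s"
  shows "F b z \<le> exp (- z) * s"
  using sums_le[OF assms(2) summable_sums[OF F_term_summable] assms(3)] assms(1)
  by (simp add: F_eq_suminf)

lemma F_ge_by_termwise:
  assumes "z > 0" "\<And>n. l n \<le> F_term b z n" "l sums s"
  shows "exp (- z) * s \<le> F b z"
  using sums_le[OF assms(2) assms(3) summable_sums[OF F_term_summable]] assms(1)
  by (simp add: F_eq_suminf)

section \<open>Lower bounds\<close>

text \<open>For b \<ge> 0 the tangent bound y^b \<ge> 1 + b ln y \<ge> 1 + b(1 - 1/y) with y = z/(n+1)
  turns the series into the explicit series of the weights and their first moment.\<close>
lemma F_lower_nonneg_exponent:
  assumes z: "z > 0" and b: "b \<ge> 0"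
  shows "1 - (1 + b) * exp (- z) \<le> F b z"
proof -
  define l where "l n = (1 + b) * pweight z n - (b / z) * (pweight z n * real (Suc n))" for n
  have "l sums ((1 + b) * (exp z - 1) - (b / z) * (z * exp z))"
    unfolding l_def[abs_def] by (intro sums_diff sums_mult pweight_sums pweight_first_moment)
  moreover have "l n \<le> F_term b z n" for n
  proof -
    define y where "y = z / real (Suc n)"
    have y: "y > 0" using z by (simp add: y_def)
    have "1 + b * (1 - 1 / y) \<le> 1 + b * ln y"
      using one_minus_inverse_le_ln[OF y] b by (simp add: mult_left_mono)
    also have "\<dots> \<le> y powr b" by (rule one_plus_ln_le_powr[OF y])
    finally have "pweight z n * (1 + b * (1 - 1 / y)) \<le> pweight z n * y powr b"
      using pweight_nonneg[of z n] z by (intro mult_left_mono) auto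
    moreover have "l n = pweight z n * (1 + b * (1 - 1 / y))"
      using z by (simp add: l_def y_def field_simps)
    ultimately show ?thesis by (simp add: F_term_def y_def)
  qed
  ultimately have "exp (- z) * ((1 + b) * (exp z - 1) - (b / z) * (z * exp z)) \<le> F b z"
    using F_ge_by_termwise[OF z] by blast
  thus ?thesis using z by (simp add: algebra_simps exp_minus_inverse)
qed

text \<open>For b < 0 the same tangent bound, now with ln y \<le> y - 1, compares F b with F 1.\<close>
lemma F_lower_neg_exponent:
  assumes z: "z > 0" and b: "b < 0"
  shows "(1 - b) * (1 - exp (- z)) + b * F 1 z \<le> F b z"
proof -
  define l where "l n = (1 - b) * pweight z n + b * F_term 1 z n" for n
  have "l sums ((1 - b) * (exp z - 1) + b * suminf (F_term 1 z))"
    unfolding l_def[abs_def]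
    by (intro sums_add sums_mult pweight_sums summable_sums F_term_summable z)
  moreover have "l n \<le> F_term b z n" for n
  proof -
    define y where "y = z / real (Suc n)"
    have y: "y > 0" using z by (simp add: y_def)
    have "1 + b * (y - 1) \<le> 1 + b * ln y"
      using ln_le_minus_one[OF y] b by (simp add: mult_left_mono_neg)
    also have "\<dots> \<le> y powr b" by (rule one_plus_ln_le_powr[OF y])
    finally have "pweight z n * (1 + b * (y - 1)) \<le> pweight z n * y powr b"
      using pweight_nonneg[of z n] z by (intro mult_left_mono) auto
    thus ?thesis using z by (simp add: l_def F_term_def y_def algebra_simps)
  qed
  ultimately have "exp (- z) * ((1 - b) * (exp z - 1) + b * suminf (F_term 1 z)) \<le> F b z"
    using F_ge_by_termwise[OF z] by blast
  thus ?thesis using F_eq_suminf[OF z, of 1] by (simp add: algebra_simps exp_minus_inverse)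
qed

section \<open>Upper bounds for negative exponents\<close>

text \<open>For b < 0 write (z/(n+1))^b = (((n+1)/z)^j)^t with t = -b/j \<le> 1 and use concavity
  of u \<mapsto> u^t: the series is bounded through the j-th moment of the weights.\<close>
lemma F_upper_by_moment:
  assumes z: "z > 0" and b: "b < 0" and j: "j \<ge> 1" "- b \<le> real j"
    and s: "(\<lambda>n. pweight z n * real (Suc n) ^ j) sums s"
  shows "F b z \<le> (1 + b / real j) * (1 - exp (- z)) + (- b / real j) * (exp (- z) * s / z ^ j)"
proof -
  define t where "t = - b / real j"
  have "real j > 0" using j by simp
  hence t: "0 \<le> t" "t \<le> 1" using b j by (auto simp: t_def le_divide_eq divide_le_eq)
  define u where "u n = (1 - t) * pweight z n + (t / z ^ j) * (pweight z n * real (Suc n) ^ j)" for n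
  have "u sums ((1 - t) * (exp z - 1) + (t / z ^ j) * s)"
    unfolding u_def[abs_def] by (intro sums_add sums_mult pweight_sums s)
  moreover have "F_term b z n \<le> u n" for n
  proof -
    define y where "y = real (Suc n) / z"
    have y: "y > 0" using z by (simp add: y_def)
    have "(z / real (Suc n)) powr b = y powr (- b)"
      using z by (simp add: y_def powr_divide powr_minus_divide)
    also have "\<dots> = (y ^ j) powr t" using powr_via_power[OF y, of j "- b"] j by (simp add: t_def)
    also have "\<dots> \<le> 1 + t * (y ^ j - 1)" using powr_le_tangent_line[OF t, of "y ^ j"] y by simp
    finally have "F_term b z n \<le> pweight z n * (1 + t * (y ^ j - 1))"
      unfolding F_term_def using pweight_nonneg[of z n] z by (intro mult_left_mono) auto
    also have "\<dots> = u n" by (simp add: u_def y_def power_divide algebra_simps)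
    finally show ?thesis .
  qed
  ultimately have "F b z \<le> exp (- z) * ((1 - t) * (exp z - 1) + (t / z ^ j) * s)"
    using F_le_by_termwise[OF z] by blast
  also have "\<dots> = (1 - t) * (exp (- z) * exp z - exp (- z)) + t * (exp (- z) * s / z ^ j)"
    by (simp add: algebra_simps)
  finally show ?thesis by (simp add: mult_exp_exp t_def)
qed

text \<open>For -1 \<le> b < 0 the first moment is explicit and F stays below 1.\<close>
lemma F_le_one:
  assumes z: "z > 0" and b: "b < 0" "b \<ge> -1"
  shows "F b z \<le> 1"
proof -
  have "F b z \<le> (1 + b) * (1 - exp (- z)) + (- b) * (exp (- z) * (z * exp z) / z)"
    using F_upper_by_moment[OF z b(1), of 1 "z * exp z"] pweight_first_moment[of z] b by simp
  also have "\<dots> = (1 + b) * (1 - exp (- z)) - b"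
    using z by (simp add: mult_exp_exp)
  also have "\<dots> \<le> 1"
    using mult_nonneg_nonneg[of "1 + b" "exp (- z)"] b by (simp add: algebra_simps)
  finally show ?thesis .
qed

lemma F_upper_neg_exponent:
  assumes z: "z > 0" and b: "b < 0" and j: "j \<ge> 1" "- b \<le> real j"
  shows "F b z \<le> (1 + b / real j) + (- b / real j) * (1 + real j / z) ^ j"
proof -
  obtain s where s: "(\<lambda>n. pweight z n * real (Suc n) ^ j) sums s" "s \<le> exp z * (z + real j) ^ j"
    using pweight_moment_bound[of z j] z j by auto
  have t: "0 \<le> - b / real j" "1 + b / real j \<ge> 0"
    using b j by (auto simp: field_simps)
  have "exp (- z) * s \<le> exp (- z) * (exp z * (z + real j) ^ j)"
    using s(2) by simp
  hence "exp (- z) * s / z ^ j \<le> (z + real j) ^ j / z ^ j"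
    using z by (intro divide_right_mono) (auto simp: mult_exp_exp mult.assoc[symmetric])
  also have "\<dots> = (1 + real j / z) ^ j"
    using z by (simp add: power_divide[symmetric] add_divide_distrib)
  finally have moment: "exp (- z) * s / z ^ j \<le> (1 + real j / z) ^ j" .
  have "F b z \<le> (1 + b / real j) * (1 - exp (- z)) + (- b / real j) * (exp (- z) * s / z ^ j)"
    by (rule F_upper_by_moment[OF z b j s(1)])
  also have "\<dots> \<le> (1 + b / real j) * (1 - exp (- z)) + (- b / real j) * (1 + real j / z) ^ j"
    using moment t by (intro add_left_mono mult_left_mono)
  also have "\<dots> \<le> (1 + b / real j) + (- b / real j) * (1 + real j / z) ^ j"
    using t by (simp add: mult_left_le)
  finally show ?thesis .
qed

section \<open>Upper bounds for nonnegative exponents\<close>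

text \<open>Raising a weight to a higher index: dividing by (n+1+j)^j instead of
  (n+2)\<cdots>(n+1+j) loses at most the next j factors of the factorial.\<close>
lemma pweight_times_power_le:
  assumes "z \<ge> 0"
  shows "pweight z n * (z / real (Suc n + j)) ^ j \<le> pweight z (n + j)"
proof -
  have "pweight z n * (z / real (Suc n + j)) ^ j
      = z ^ Suc (n + j) / (fact (Suc n) * real (Suc n + j) ^ j)"
    by (simp add: pweight_def power_divide power_add)
  also have "\<dots> \<le> z ^ Suc (n + j) / fact (Suc n + j)"
    using assms fact_add_le[of "Suc n" j] by (intro divide_left_mono) auto
  also have "\<dots> = pweight z (n + j)" by (simp add: pweight_def)
  finally show ?thesis .
qed

lemma F_term_head_bound:
  assumes z: "z > 0" and b: "b \<ge> 0"
  shows "F_term b z n \<le> z powr b * pweight z n"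
proof -
  have "(z / real (Suc n)) powr b \<le> z powr b"
    using z b by (intro powr_mono2) (auto simp: divide_le_eq)
  thus ?thesis unfolding F_term_def using pweight_nonneg[of z n] z
    by (simp add: mult_left_mono mult.commute)
qed

text \<open>From index L on, write z/(n+1) = y \<cdot> (n+1+j)/(n+1) with y = z/(n+1+j): the second
  factor is at most 1 + j/(L+1), and concavity of u \<mapsto> u^(b/j) applied to y^j
  compares the term with the shifted weight of index n + j.\<close>
lemma F_term_tail_bound:
  assumes z: "z > 0" and b: "0 \<le> b" "b \<le> real j" and j: "j \<ge> 1" and n: "L \<le> n"
  shows "F_term b z n \<le> (1 + real j / real (Suc L)) powr b *
           ((1 - b / real j) * pweight z n + b / real j * pweight z (n + j))"
proof -
  define t where "t = b / real j"
  define C where "C = (1 + real j / real (Suc L)) powr b"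
  define y where "y = z / real (Suc n + j)"
  have t: "0 \<le> t" "t \<le> 1" using b j by (auto simp: t_def divide_le_eq)
  have y: "y > 0" using z by (simp add: y_def)
  have q: "pweight z n \<ge> 0" using pweight_nonneg[of z n] z by simp
  have "real (Suc n + j) / real (Suc n) = 1 + real j / real (Suc n)"
    by (simp add: field_simps)
  also have "\<dots> \<le> 1 + real j / real (Suc L)"
    using n by (intro add_left_mono divide_left_mono) auto
  finally have ratio: "(real (Suc n + j) / real (Suc n)) powr b \<le> C"
    unfolding C_def using b by (intro powr_mono2) auto
  have concave: "y powr b \<le> 1 + t * (y ^ j - 1)"
    using powr_via_power[OF y, of j b] powr_le_tangent_line[OF t, of "y ^ j"] y j
    by (simp add: t_def)
  have "F_term b z n = pweight z n * y powr b * (real (Suc n + j) / real (Suc n)) powr b"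
    using y by (simp add: F_term_def y_def powr_mult[symmetric] mult.assoc)
  also have "\<dots> \<le> pweight z n * (1 + t * (y ^ j - 1)) * C"
    using ratio concave q order_trans[OF powr_ge_zero concave]
    by (intro mult_mono mult_left_mono) (auto simp: C_def)
  also have "\<dots> = C * ((1 - t) * pweight z n + t * (pweight z n * y ^ j))"
    by (simp add: algebra_simps)
  also have "\<dots> \<le> C * ((1 - t) * pweight z n + t * pweight z (n + j))"
    using pweight_times_power_le[of z n j] z t
    by (intro mult_left_mono add_left_mono) (auto simp: y_def C_def)
  finally show ?thesis by (simp add: C_def t_def)
qed

lemma F_upper_nonneg_exponent:
  assumes z: "z > 0" and b: "0 \<le> b" "b \<le> real j" and j: "j \<ge> 1"
  shows "F b z \<le> exp (- z) * z powr b * (\<Sum>n<L. pweight z n) + (1 + real j / real (Suc L)) powr b"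
proof -
  define t where "t = b / real j"
  define C where "C = (1 + real j / real (Suc L)) powr b"
  have t: "0 \<le> t" "t \<le> 1" using b j by (auto simp: t_def divide_le_eq)
  obtain R where R: "(\<lambda>n. pweight z (n + j)) sums R" "R \<le> exp z - 1"
    using pweight_shift_sums[of z j] z by auto
  define u where "u n = (if n \<in> {..<L} then z powr b * pweight z n else 0)
      + C * ((1 - t) * pweight z n + t * pweight z (n + j))" for n
  have "u sums ((\<Sum>n<L. z powr b * pweight z n) + C * ((1 - t) * (exp z - 1) + t * R))"
    unfolding u_def[abs_def] by (intro sums_add sums_If_finite_set sums_mult pweight_sums R(1)) auto
  moreover have "F_term b z n \<le> u n" for n
  proof (cases "n < L")
    case True
    have "0 \<le> C * ((1 - t) * pweight z n + t * pweight z (n + j))"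
      using t z by (auto simp: C_def pweight_nonneg)
    thus ?thesis using True F_term_head_bound[OF z b(1), of n] by (simp add: u_def)
  qed (use F_term_tail_bound[OF z b j] in \<open>auto simp: u_def C_def t_def\<close>)
  ultimately have "F b z \<le> exp (- z) *
      ((\<Sum>n<L. z powr b * pweight z n) + C * ((1 - t) * (exp z - 1) + t * R))"
    using F_le_by_termwise[OF z] by blast
  also have "\<dots> \<le> exp (- z) * ((\<Sum>n<L. z powr b * pweight z n) + C * exp z)"
  proof -
    have "(1 - t) * (exp z - 1) + t * R \<le> exp z"
      using t R(2) mult_left_mono[OF R(2) t(1)] by (simp add: algebra_simps)
    thus ?thesis by (intro mult_left_mono add_left_mono) (auto simp: C_def)
  qed
  also have "\<dots> = exp (- z) * z powr b * (\<Sum>n<L. pweight z n) + C * (exp (- z) * exp z)"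
    by (simp add: algebra_simps sum_distrib_left)
  finally show ?thesis by (simp add: C_def mult_exp_exp)
qed

section \<open>The limit at infinity\<close>

lemma exp_neg_tendsto_0: "((\<lambda>z::real. exp (- z)) \<longlongrightarrow> 0) at_top"
  by (intro filterlim_compose[OF exp_at_bot] filterlim_uminus_at_bot_at_top)

lemma head_term_tendsto_0:
  "((\<lambda>z. exp (- z) * z powr b * pweight z n) \<longlongrightarrow> 0) at_top"
proof (rule tendsto_sandwich)
  define m where "m = nat \<lceil>b\<rceil> + Suc n"
  show "\<forall>\<^sub>F z in at_top. 0 \<le> exp (- z) * z powr b * pweight z n"
    using eventually_gt_at_top[of 0] by eventually_elim (simp add: pweight_nonneg)
  show "\<forall>\<^sub>F z in at_top. exp (- z) * z powr b * pweight z n \<le> z ^ m / exp z"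
    using eventually_ge_at_top[of 1]
  proof eventually_elim
    case (elim z)
    have "z powr b \<le> z powr real (nat \<lceil>b\<rceil>)"
      using elim by (intro powr_mono) linarith+
    hence "z powr b \<le> z ^ nat \<lceil>b\<rceil>" using elim by (simp add: powr_realpow)
    moreover have "pweight z n \<le> z ^ Suc n / 1"
      unfolding pweight_def using elim by (intro divide_left_mono) (auto simp del: fact_Suc)
    ultimately have "z powr b * pweight z n \<le> z ^ nat \<lceil>b\<rceil> * z ^ Suc n"
      using elim pweight_nonneg[of z n] by (intro mult_mono) auto
    hence "z powr b * pweight z n \<le> z ^ m" by (simp add: m_def power_add mult_ac)
    thus ?case by (simp add: exp_minus field_simps)
  qed
  show "((\<lambda>z::real. z ^ m / exp z) \<longlongrightarrow> 0) at_top" by (rule tendsto_power_div_exp_0)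
qed simp

lemma F_tendsto_1_nonneg_exponent:
  assumes b: "b \<ge> 0"
  shows "(F b \<longlongrightarrow> 1) at_top"
proof (rule order_tendstoI)
  fix a :: real assume "a < 1"
  have "((\<lambda>z. 1 - (1 + b) * exp (- z)) \<longlongrightarrow> 1 - (1 + b) * 0) at_top"
    by (intro tendsto_intros exp_neg_tendsto_0)
  hence "\<forall>\<^sub>F z in at_top. a < 1 - (1 + b) * exp (- z)"
    using \<open>a < 1\<close> by (intro order_tendstoD) auto
  thus "\<forall>\<^sub>F z in at_top. a < F b z"
    using eventually_gt_at_top[of 0]
    by eventually_elim (use F_lower_nonneg_exponent b in force)
next
  fix a :: real assume "1 < a"
  define e where "e = (a - 1) / 2"
  have e: "e > 0" using \<open>1 < a\<close> by (simp add: e_def)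
  define j where "j = Suc (nat \<lceil>b\<rceil>)"
  have j: "j \<ge> 1" "b \<le> real j" unfolding j_def by linarith+
  have "(\<lambda>L. (1 + real j / real (Suc L)) powr b) \<longlonglongrightarrow> (1 + 0) powr b"
    by (intro tendsto_powr tendsto_add tendsto_const LIMSEQ_Suc[OF lim_const_over_n]) auto
  hence "\<forall>\<^sub>F L in sequentially. (1 + real j / real (Suc L)) powr b < 1 + e"
    using e by (intro order_tendstoD) auto
  then obtain L where L: "(1 + real j / real (Suc L)) powr b < 1 + e"
    unfolding eventually_sequentially by blast
  have "((\<lambda>z. \<Sum>n<L. exp (- z) * z powr b * pweight z n) \<longlongrightarrow> (\<Sum>n<L. 0)) at_top"
    by (intro tendsto_sum head_term_tendsto_0)
  hence "\<forall>\<^sub>F z in at_top. exp (- z) * z powr b * (\<Sum>n<L. pweight z n) < e"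
    using e by (intro order_tendstoD) (auto simp: sum_distrib_left)
  thus "\<forall>\<^sub>F z in at_top. F b z < a"
    using eventually_gt_at_top[of 0]
  proof eventually_elim
    case (elim z)
    thus ?case using F_upper_nonneg_exponent[OF elim(2) b j(2) j(1), of L] L
      unfolding e_def by argo
  qed
qed

text \<open>For b < 0 the lower bound involves F 1, whose limit is already known.\<close>
lemma F_tendsto_1_neg_exponent:
  assumes b: "b < 0"
  shows "(F b \<longlongrightarrow> 1) at_top"
proof (rule tendsto_sandwich)
  define j where "j = Suc (nat \<lceil>- b\<rceil>)"
  have j: "j \<ge> 1" "- b \<le> real j" unfolding j_def by linarith+
  show "\<forall>\<^sub>F z in at_top. (1 - b) * (1 - exp (- z)) + b * F 1 z \<le> F b z"
    using eventually_gt_at_top[of 0] by eventually_elim (rule F_lower_neg_exponent[OF _ b])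
  show "\<forall>\<^sub>F z in at_top. F b z \<le> (1 + b / real j) + (- b / real j) * (1 + real j / z) ^ j"
    using eventually_gt_at_top[of 0] by eventually_elim (rule F_upper_neg_exponent[OF _ b j])
  have "((\<lambda>z. (1 - b) * (1 - exp (- z)) + b * F 1 z) \<longlongrightarrow> (1 - b) * (1 - 0) + b * 1) at_top"
    by (intro tendsto_intros exp_neg_tendsto_0 F_tendsto_1_nonneg_exponent) auto
  thus "((\<lambda>z. (1 - b) * (1 - exp (- z)) + b * F 1 z) \<longlongrightarrow> 1) at_top" by simp
  have "((\<lambda>z::real. (1 + b / real j) + (- b / real j) * (1 + real j / z) ^ j) \<longlongrightarrow>
      (1 + b / real j) + (- b / real j) * (1 + 0) ^ j) at_top"
    by (intro tendsto_intros tendsto_divide_0[OF tendsto_const]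
        filterlim_at_top_imp_at_infinity[OF filterlim_ident])
  thus "((\<lambda>z::real. (1 + b / real j) + (- b / real j) * (1 + real j / z) ^ j) \<longlongrightarrow> 1) at_top"
    by simp
qed

text \<open>For b \<ge> 0 take the cut-off L = 0 in the upper bound; for -1 \<le> b < 0 use F b \<le> 1;
  at z = 0 the factor z^(b+1) vanishes.\<close>
lemma F_bdd_above:
  assumes b: "b \<ge> -1"
  shows "bdd_above (F b ` {0..})"
proof (rule bdd_aboveI2)
  define j where "j = Suc (nat \<lceil>b\<rceil>)"
  fix z :: real assume "z \<in> {0..}"
  show "F b z \<le> max 1 ((1 + real j) powr b)"
  proof (cases "z = 0")
    case False
    with \<open>z \<in> {0..}\<close> have z: "z > 0" by simp
    show ?thesis
    proof (cases "b \<ge> 0")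
      case True
      have "b \<le> real j" unfolding j_def by linarith
      thus ?thesis using F_upper_nonneg_exponent[OF z True _ _, of j 0] by (simp add: j_def)
    qed (use F_le_one[OF z _ b] in auto)
  qed (simp add: F_def)
qed

theorem mainTheorem11:
  shows "(\<forall>b::real. (F b \<longlongrightarrow> 1) at_top) \<and>
         (\<forall>b::real. b \<ge> -1 \<longrightarrow> bdd_above (F b ` {0..}))"
proof (intro conjI allI impI)
  fix b :: real
  show "(F b \<longlongrightarrow> 1) at_top"
  proof (cases "b \<ge> 0")
    case True
    thus ?thesis by (rule F_tendsto_1_nonneg_exponent)
  next
    case False
    thus ?thesis by (intro F_tendsto_1_neg_exponent) simp
  qed
next
  fix b :: real
  assume "b \<ge> -1"
  thus "bdd_above (F b ` {0..})" by (rule F_bdd_above)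
qed

end
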